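(* Let $m,n\geq 2$ be integers. Then $c_{\mathrm{poly}}(mn)\geq c_{\mathrm{poly}}(n)+1$.
   Context: $S(\mathbb{Z}_n)$ is the set of bijections $\mathbb{Z}_n\to\mathbb{Z}_n$, and $S_{\mathrm{poly}}(\mathbb{Z}_n)$ is the set of $\pi\in S(\mathbb{Z}_n)$ for which there is a polynomial $f\in\mathbb{Z}_n[x]$ with $\pi(x)=f(x)$ for all $x\in\mathbb{Z}_n$. $\mathrm{cyc}(\pi)$ is the number of cycles (including fixed points) of $\pi$. Define $c_{\mathrm{poly}}(n)=\min_{\pi\in S_{\mathrm{poly}}(\mathbb{Z}_n)}\max_{k\in\mathbb{Z}_n}\mathrm{cyc}(x\mapsto\pi(x+k))$. *)

theory Defs
  imports "HOL-Computational_Algebra.Polynomial"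
begin

text \<open>Z_n is modelled by {0..<n} :: nat set. A permutation of Z_n is a function
  nat => nat that is a bijection of {0..<n} and the identity outside it.\<close>

definition perms_Zn :: "nat \<Rightarrow> (nat \<Rightarrow> nat) set" where
  "perms_Zn n = {\<pi>. bij_betw \<pi> {0..<n} {0..<n} \<and> (\<forall>x\<ge>n. \<pi> x = x)}"

text \<open>Polynomial permutations: induced by a polynomial over Z_n, i.e. by an integer
  polynomial with coefficients read modulo n.\<close>

definition perms_poly_Zn :: "nat \<Rightarrow> (nat \<Rightarrow> nat) set" where
  "perms_poly_Zn n = {\<pi> \<in> perms_Zn n.
     \<exists>f :: int poly. \<forall>x<n. int (\<pi> x) = poly f (int x) mod int n}"

text \<open>Number of cycles (including fixed points) of a map on {0..<n}: number of distinct orbits.\<close>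

definition orbit_of :: "(nat \<Rightarrow> nat) \<Rightarrow> nat \<Rightarrow> nat set" where
  "orbit_of \<sigma> x = {(\<sigma> ^^ j) x | j. True}"

definition cyc :: "nat \<Rightarrow> (nat \<Rightarrow> nat) \<Rightarrow> nat" where
  "cyc n \<sigma> = card (orbit_of \<sigma> ` {0..<n})"

definition c_poly :: "nat \<Rightarrow> nat" where
  "c_poly n = Min ((\<lambda>\<pi>. Max ((\<lambda>k. cyc n (\<lambda>x. \<pi> ((x + k) mod n))) ` {0..<n}))
                    ` perms_poly_Zn n)"

end

theory Submission
  imports Defs "HOL-Library.FuncSet"
begin

text \<open>Let \<open>\<pi>\<close> be a polynomial permutation of \<open>Z_mn\<close> realising \<open>c_poly (mn)\<close>, induced by \<open>f\<close>.
  Since \<open>f (m y) \<equiv> f 0 (mod m)\<close>, \<open>\<pi>\<close> maps the multiples of \<open>m\<close> onto a single coset \<open>c + mZ\<close>,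
  and \<open>\<pi> (m y) = m h(y) + c\<close> for a polynomial permutation \<open>h\<close> of \<open>Z_n\<close>. Pick \<open>s\<close> such that
  \<open>y \<mapsto> h (y + s)\<close> has the maximal number of cycles among the shifts of \<open>h\<close>. The shift of \<open>\<pi>\<close>
  by \<open>m s - c\<close> leaves \<open>c + mZ\<close> invariant and acts there as a conjugate of \<open>y \<mapsto> h (y + s)\<close>;
  as \<open>m \<ge> 2\<close>, the points outside this coset contribute at least one further cycle.\<close>

definition max_shift_cyc :: "nat \<Rightarrow> (nat \<Rightarrow> nat) \<Rightarrow> nat" where
  "max_shift_cyc n \<pi> = Max ((\<lambda>k. cyc n (\<lambda>x. \<pi> ((x + k) mod n))) ` {0..<n})"

lemma c_poly_eq_Min_max_shift_cyc: "c_poly n = Min (max_shift_cyc n ` perms_poly_Zn n)"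
  by (simp add: c_poly_def max_shift_cyc_def)

lemma finite_perms_Zn: "finite (perms_Zn n)"
proof -
  have "perms_Zn n \<subseteq> (\<lambda>g x. if x < n then g x else x) ` ({0..<n} \<rightarrow>\<^sub>E {0..<n})"
  proof
    fix \<pi> assume "\<pi> \<in> perms_Zn n"
    hence bij: "bij_betw \<pi> {0..<n} {0..<n}" and id: "\<forall>x\<ge>n. \<pi> x = x"
      by (auto simp: perms_Zn_def)
    have "restrict \<pi> {0..<n} \<in> {0..<n} \<rightarrow>\<^sub>E {0..<n}"
      using bij by (auto simp: bij_betw_def)
    moreover have "\<pi> = (\<lambda>x. if x < n then restrict \<pi> {0..<n} x else x)"
      using id by (auto simp: fun_eq_iff)
    ultimately show "\<pi> \<in> (\<lambda>g x. if x < n then g x else x) ` ({0..<n} \<rightarrow>\<^sub>E {0..<n})"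
      by blast
  qed
  thus ?thesis
    by (rule finite_subset) (intro finite_imageI finite_PiE, auto)
qed

lemma finite_perms_poly_Zn: "finite (perms_poly_Zn n)"
  using finite_perms_Zn by (rule finite_subset[rotated]) (auto simp: perms_poly_Zn_def)

lemma id_in_perms_poly_Zn: "(\<lambda>x. x) \<in> perms_poly_Zn n"
  unfolding perms_poly_Zn_def perms_Zn_def
  by (auto simp: bij_betw_def intro!: exI[of _ "[:0, 1:]"])

lemma c_poly_le_max_shift_cyc: "\<pi> \<in> perms_poly_Zn n \<Longrightarrow> c_poly n \<le> max_shift_cyc n \<pi>"
  unfolding c_poly_eq_Min_max_shift_cyc by (rule Min_le) (simp_all add: finite_perms_poly_Zn)

lemma c_poly_attained: "\<exists>\<pi> \<in> perms_poly_Zn n. c_poly n = max_shift_cyc n \<pi>"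
proof -
  have "c_poly n \<in> max_shift_cyc n ` perms_poly_Zn n"
    unfolding c_poly_eq_Min_max_shift_cyc
    by (rule Min_in) (use finite_perms_poly_Zn id_in_perms_poly_Zn in auto)
  thus ?thesis by auto
qed

lemma cyc_shift_le_max_shift_cyc:
  "k < n \<Longrightarrow> cyc n (\<lambda>x. \<pi> ((x + k) mod n)) \<le> max_shift_cyc n \<pi>"
  unfolding max_shift_cyc_def by (rule Max_ge) auto

lemma max_shift_cyc_attained:
  assumes "n > 0"
  shows "\<exists>k < n. max_shift_cyc n \<pi> = cyc n (\<lambda>x. \<pi> ((x + k) mod n))"
proof -
  have "max_shift_cyc n \<pi> \<in> (\<lambda>k. cyc n (\<lambda>x. \<pi> ((x + k) mod n))) ` {0..<n}"
    unfolding max_shift_cyc_def by (rule Max_in) (use assms in auto)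
  thus ?thesis by auto
qed

lemma orbit_of_intertwining:
  assumes "\<tau> ` A \<subseteq> A" and "\<forall>y \<in> A. \<sigma> (\<phi> y) = \<phi> (\<tau> y)" and "y \<in> A"
  shows "orbit_of \<sigma> (\<phi> y) = \<phi> ` orbit_of \<tau> y"
proof -
  have "(\<sigma> ^^ j) (\<phi> y) = \<phi> ((\<tau> ^^ j) y) \<and> (\<tau> ^^ j) y \<in> A" for j
    using assms by (induction j) auto
  thus ?thesis unfolding orbit_of_def by auto
qed

lemma orbit_of_subset:
  assumes "\<tau> ` A \<subseteq> A" and "y \<in> A"
  shows "orbit_of \<tau> y \<subseteq> A"
proof -
  have "(\<tau> ^^ j) y \<in> A" for j
    using assms by (induction j) auto
  thus ?thesis unfolding orbit_of_def by auto
qed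

lemma cyc_less_of_intertwining:
  assumes \<tau>: "\<tau> ` {0..<n} \<subseteq> {0..<n}" and \<phi>: "\<phi> ` {0..<n} \<subseteq> {0..<N}"
    and inj: "inj_on \<phi> {0..<n}" and comm: "\<forall>y \<in> {0..<n}. \<sigma> (\<phi> y) = \<phi> (\<tau> y)"
    and z: "z < N" "z \<notin> \<phi> ` {0..<n}"
  shows "cyc n \<tau> < cyc N \<sigma>"
proof -
  define A where "A = orbit_of \<tau> ` {0..<n}"
  have A_Pow: "A \<subseteq> Pow {0..<n}"
    using orbit_of_subset[OF \<tau>] by (simp add: A_def image_subset_iff)
  have orbits_image: "image \<phi> ` A \<subseteq> orbit_of \<sigma> ` {0..<N}"
  proof
    fix Q assume "Q \<in> image \<phi> ` A"
    then obtain y where y: "y \<in> {0..<n}" and "Q = \<phi> ` orbit_of \<tau> y"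
      by (auto simp: A_def)
    hence "Q = orbit_of \<sigma> (\<phi> y)"
      using orbit_of_intertwining[OF \<tau> comm] by simp
    with \<phi> y show "Q \<in> orbit_of \<sigma> ` {0..<N}"
      by blast
  qed
  have z_orbit: "orbit_of \<sigma> z \<notin> image \<phi> ` A"
  proof
    assume "orbit_of \<sigma> z \<in> image \<phi> ` A"
    then obtain B where "B \<subseteq> {0..<n}" and "orbit_of \<sigma> z = \<phi> ` B"
      using A_Pow by auto
    moreover have "z \<in> orbit_of \<sigma> z"
      unfolding orbit_of_def by (auto intro: exI[of _ 0])
    ultimately show False
      using z(2) by blast
  qed
  have "inj_on (image \<phi>) A"
    using inj_on_subset[OF inj_on_image_Pow[OF inj] A_Pow] .
  hence "cyc n \<tau> < card (insert (orbit_of \<sigma> z) (image \<phi> ` A))"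
    using z_orbit by (simp add: A_def cyc_def card_image)
  also have "\<dots> \<le> cyc N \<sigma>"
    unfolding cyc_def by (rule card_mono) (use orbits_image z(1) in auto)
  finally show ?thesis .
qed

lemma poly_mult_arg_decomp:
  fixes f :: "int poly" and m :: int
  shows "\<exists>H. \<forall>y. poly f (m * y) = poly f 0 mod m + m * poly H y"
proof -
  obtain a g where f: "f = pCons a g" by (cases f) auto
  define H where "H = [:a div m:] + pCons 0 (g \<circ>\<^sub>p [:0, m:])"
  have "poly f (m * y) = poly f 0 mod m + m * poly H y" for y
  proof -
    have "poly f 0 mod m + m * poly H y = (a mod m + m * (a div m)) + m * y * poly g (m * y)"
      by (simp add: f H_def poly_pcompose algebra_simps)
    also have "\<dots> = poly f (m * y)"
      by (simp add: f algebra_simps)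
    finally show ?thesis ..
  qed
  thus ?thesis by blast
qed

lemma perms_poly_Zn_on_multiples_int:
  assumes "\<pi> \<in> perms_poly_Zn (m * n)" and "m > 0"
  obtains H :: "int poly" and c where "c < m"
    "\<forall>y < n. int (\<pi> (m * y)) = int m * (poly H (int y) mod int n) + int c"
proof -
  from assms obtain f :: "int poly"
    where f: "\<forall>x < m * n. int (\<pi> x) = poly f (int x) mod int (m * n)"
    by (auto simp: perms_poly_Zn_def)
  obtain H where H: "\<forall>y. poly f (int m * y) = poly f 0 mod int m + int m * poly H y"
    using poly_mult_arg_decomp by blast
  define c where "c = nat (poly f 0 mod int m)"
  have c: "int c = poly f 0 mod int m" "c < m"
    using \<open>m > 0\<close> by (simp_all add: c_def nat_less_iff)
  have "int (\<pi> (m * y)) = int m * (poly H (int y) mod int n) + int c" if "y < n" for y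
  proof -
    have "m * y < m * n" using that \<open>m > 0\<close> by simp
    hence "int (\<pi> (m * y)) = (int c + int m * poly H (int y)) mod (int m * int n)"
      using f H c by simp
    also have "\<dots> = int m * (poly H (int y) mod int n) + int c"
      using c \<open>m > 0\<close> by (simp add: mod_mult2_eq')
    finally show ?thesis .
  qed
  with c that show ?thesis by blast
qed

lemma perms_poly_Zn_on_multiples:
  assumes \<pi>: "\<pi> \<in> perms_poly_Zn (m * n)" and "m > 0" "n > 0"
  obtains h c where "h \<in> perms_poly_Zn n" "c < m" "\<forall>y < n. \<pi> (m * y) = m * h y + c"
proof -
  obtain H c where "c < m"
    and \<pi>_int: "\<forall>y < n. int (\<pi> (m * y)) = int m * (poly H (int y) mod int n) + int c"
    using perms_poly_Zn_on_multiples_int[OF \<pi> \<open>m > 0\<close>] by blast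
  have bij: "bij_betw \<pi> {0..<m * n} {0..<m * n}"
    using \<pi> by (simp add: perms_poly_Zn_def perms_Zn_def)
  define h where "h = (\<lambda>y. if y < n then \<pi> (m * y) div m else y)"
  have h_int: "int (h y) = poly H (int y) mod int n" if "y < n" for y
  proof -
    have "int (h y) = int (\<pi> (m * y)) div int m"
      using that by (simp add: h_def zdiv_int)
    also have "\<dots> = poly H (int y) mod int n"
      using \<pi>_int that \<open>c < m\<close> by simp
    finally show ?thesis .
  qed
  have \<pi>_mult: "\<forall>y < n. \<pi> (m * y) = m * h y + c"
    using \<pi>_int h_int by (metis of_nat_add of_nat_eq_iff of_nat_mult)
  have "h y < n" if "y < n" for y
    using h_int[OF that] pos_mod_bound[of "int n" "poly H (int y)"] \<open>n > 0\<close> by linarith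
  hence h_range: "h ` {0..<n} \<subseteq> {0..<n}" by auto
  have "inj_on h {0..<n}"
  proof (rule inj_onI)
    fix a b assume ab: "a \<in> {0..<n}" "b \<in> {0..<n}" "h a = h b"
    hence "\<pi> (m * a) = \<pi> (m * b)" using \<pi>_mult by simp
    moreover have "m * a \<in> {0..<m * n}" "m * b \<in> {0..<m * n}" using ab \<open>m > 0\<close> by auto
    ultimately show "a = b"
      using bij_betw_imp_inj_on[OF bij] \<open>m > 0\<close> by (simp add: inj_on_eq_iff)
  qed
  hence "bij_betw h {0..<n} {0..<n}"
    using endo_inj_surj[OF _ h_range] by (simp add: bij_betw_def)
  hence "h \<in> perms_poly_Zn n"
    using h_int unfolding perms_poly_Zn_def perms_Zn_def by (auto simp: h_def)
  with \<open>c < m\<close> \<pi>_mult show ?thesis using that by blast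
qed

lemma cyc_shift_less_of_multiples:
  assumes "m \<ge> 2" "s < n" "c < m"
    and h: "h ` {0..<n} \<subseteq> {0..<n}" and \<pi>: "\<forall>y < n. \<pi> (m * y) = m * h y + c"
  shows "\<exists>k < m * n. cyc n (\<lambda>x. h ((x + s) mod n)) < cyc (m * n) (\<lambda>x. \<pi> ((x + k) mod (m * n)))"
proof -
  define k where "k = (m * s + m * n - c) mod (m * n)"
  have "m \<le> m * n" using assms by simp
  have k_shift: "(m * y + c + k) mod (m * n) = m * ((y + s) mod n)" for y
  proof -
    have "c \<le> m * s + m * n" using \<open>c < m\<close> \<open>m \<le> m * n\<close> by linarith
    hence k_sum: "m * y + c + (m * s + m * n - c) = m * (y + s) + m * n"
      by (simp add: add_mult_distrib2)
    have "(m * y + c + k) mod (m * n) = (m * y + c + (m * s + m * n - c)) mod (m * n)"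
      unfolding k_def by (rule mod_add_right_eq)
    also have "\<dots> = (m * (y + s)) mod (m * n)"
      unfolding k_sum by simp
    also have "\<dots> = m * ((y + s) mod n)"
      by (rule mult_mod_right[symmetric])
    finally show ?thesis .
  qed
  have embed_range: "m * y + c < m * n" if "y < n" for y
  proof -
    have "m * (y + 1) \<le> m * n" using that by (intro mult_le_mono2) simp
    thus ?thesis using \<open>c < m\<close> by simp
  qed
  have z_notin: "(c + 1) mod m \<notin> (\<lambda>y. m * y + c) ` {0..<n}"
  proof
    assume "(c + 1) mod m \<in> (\<lambda>y. m * y + c) ` {0..<n}"
    then obtain y where "(c + 1) mod m = m * y + c" by auto
    hence "(c + 1) mod m mod m = (m * y + c) mod m" by simp
    hence "(c + 1) mod m = c" using \<open>c < m\<close> by simp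
    thus False
      using \<open>m \<ge> 2\<close> \<open>c < m\<close> by (cases "c + 1 = m") simp_all
  qed
  have z_range: "(c + 1) mod m < m * n"
  proof -
    have "(c + 1) mod m < m" using \<open>m \<ge> 2\<close> by simp
    also note \<open>m \<le> m * n\<close>
    finally show ?thesis .
  qed
  have "cyc n (\<lambda>x. h ((x + s) mod n)) < cyc (m * n) (\<lambda>x. \<pi> ((x + k) mod (m * n)))"
  proof (rule cyc_less_of_intertwining[where \<phi> = "\<lambda>y. m * y + c"])
    show "(\<lambda>x. h ((x + s) mod n)) ` {0..<n} \<subseteq> {0..<n}"
      using h \<open>s < n\<close> by auto
    show "(\<lambda>y. m * y + c) ` {0..<n} \<subseteq> {0..<m * n}"
      using embed_range by auto
    show "inj_on (\<lambda>y. m * y + c) {0..<n}"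
      using \<open>m \<ge> 2\<close> by (simp add: inj_on_def)
    show "\<forall>y \<in> {0..<n}. \<pi> ((m * y + c + k) mod (m * n)) = m * h ((y + s) mod n) + c"
      using k_shift \<pi> \<open>s < n\<close> by simp
  qed (use z_range z_notin in auto)
  moreover have "k < m * n"
    unfolding k_def using \<open>s < n\<close> \<open>m \<ge> 2\<close> by simp
  ultimately show ?thesis by blast
qed

theorem lemma5p2:
  fixes m n :: nat
  assumes "m \<ge> 2" and "n \<ge> 2"
  shows "c_poly (m * n) \<ge> c_poly n + 1"
proof -
  obtain \<pi> where \<pi>: "\<pi> \<in> perms_poly_Zn (m * n)" and c_mn: "c_poly (m * n) = max_shift_cyc (m * n) \<pi>"
    using c_poly_attained by blast
  have "m > 0" "n > 0" using assms by auto
  with \<pi> obtain h c where h: "h \<in> perms_poly_Zn n" and "c < m"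
    and \<pi>_mult: "\<forall>y < n. \<pi> (m * y) = m * h y + c"
    by (rule perms_poly_Zn_on_multiples)
  obtain s where "s < n" and s: "max_shift_cyc n h = cyc n (\<lambda>x. h ((x + s) mod n))"
    using max_shift_cyc_attained \<open>n > 0\<close> by blast
  have h_range: "h ` {0..<n} \<subseteq> {0..<n}"
    using h by (auto simp: perms_poly_Zn_def perms_Zn_def bij_betw_def)
  obtain k where "k < m * n"
    and k: "cyc n (\<lambda>x. h ((x + s) mod n)) < cyc (m * n) (\<lambda>x. \<pi> ((x + k) mod (m * n)))"
    using cyc_shift_less_of_multiples[OF \<open>m \<ge> 2\<close> \<open>s < n\<close> \<open>c < m\<close> h_range \<pi>_mult] by blast
  have "c_poly n \<le> max_shift_cyc n h"
    using h by (rule c_poly_le_max_shift_cyc)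
  also have "\<dots> < cyc (m * n) (\<lambda>x. \<pi> ((x + k) mod (m * n)))"
    using s k by simp
  also have "\<dots> \<le> c_poly (m * n)"
    unfolding c_mn using \<open>k < m * n\<close> by (rule cyc_shift_le_max_shift_cyc)
  finally show ?thesis by simp
qed

end
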